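(* Let $\mathscr{P},\mathscr{Q}$ be finite posets and $\mathscr{R}$ a finite poset. (1) $\mathscr{R}\in SAv(\mathscr{P}\sqcup\mathscr{Q})$ if and only if for every partition $(R_1,R_2)$ of the ground set of $\mathscr{R}$ into two blocks, with $\mathscr{R}_1,\mathscr{R}_2$ the induced subposets on $R_1,R_2$, either $\mathscr{R}_1\in SAv(\mathscr{P})$ or $\mathscr{R}_2\in SAv(\mathscr{Q})$. (2) If $\mathscr{R}\in SAv(\mathscr{P}\oplus\mathscr{Q})$, then for every ordered partition $(R_1,R_2)$ of $\mathscr{R}$ into two blocks, either $\mathscr{R}_1\in SAv(\mathscr{P})$ or $\mathscr{R}_2\in SAv(\mathscr{Q})$. If $\mathscr{R}\notin SAv(\mathscr{P}\oplus\mathscr{Q})$, then there exists a weakly ordered partition $(R_1,R_2)$ of $\mathscr{R}$ into two blocks such that $\mathscr{R}_1\notin SAv(\mathscr{P})$ and $\mathscr{R}_2\notin SAv(\mathscr{Q})$.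
   Context: A poset $\mathscr{R}$ weakly contains $\mathscr{P}$ if there is an injective order-preserving map $\mathscr{P}\to\mathscr{R}$; $\mathscr{R}$ strongly avoids $\mathscr{P}$ otherwise, and $SAv(\mathscr{P})$ is the class of finite posets strongly avoiding $\mathscr{P}$. A partition into two blocks is an ordered pair $(R_1,R_2)$ of disjoint subsets whose union is the ground set. It is an ordered partition if $x\le y$ for all $x\in R_1$, $y\in R_2$, and a weakly ordered partition if $x\not\ge y$ for all $x\in R_1$, $y\in R_2$. The disjoint union $\mathscr{P}\sqcup\mathscr{Q}$ has as ground set the disjoint union of the ground sets, with $x\le y$ iff $x\le y$ in $\mathscr{P}$ or in $\mathscr{Q}$. The linear sum $\mathscr{P}\oplus\mathscr{Q}$ has the same ground set, with $x\le y$ iff $x\le y$ in $\mathscr{P}$, or $x\le y$ in $\mathscr{Q}$, or $x\in\mathscr{P}$ and $y\in\mathscr{Q}$. *)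

theory Defs
  imports Main
begin

text \<open>A poset is represented by a ground set A and a relation le, which is a partial
order on A. Induced subposets are obtained by restricting the ground set and keeping le.\<close>

definition poset_on :: "'a set \<Rightarrow> ('a \<Rightarrow> 'a \<Rightarrow> bool) \<Rightarrow> bool" where
  "poset_on A le \<longleftrightarrow>
     (\<forall>x\<in>A. le x x) \<and>
     (\<forall>x\<in>A. \<forall>y\<in>A. le x y \<and> le y x \<longrightarrow> x = y) \<and>
     (\<forall>x\<in>A. \<forall>y\<in>A. \<forall>z\<in>A. le x y \<and> le y z \<longrightarrow> le x z)"

definition finite_poset :: "'a set \<Rightarrow> ('a \<Rightarrow> 'a \<Rightarrow> bool) \<Rightarrow> bool" where
  "finite_poset A le \<longleftrightarrow> finite A \<and> poset_on A le"

definition weakly_contains ::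
  "'r set \<Rightarrow> ('r \<Rightarrow> 'r \<Rightarrow> bool) \<Rightarrow> 'p set \<Rightarrow> ('p \<Rightarrow> 'p \<Rightarrow> bool) \<Rightarrow> bool" where
  "weakly_contains R leR P leP \<longleftrightarrow>
     (\<exists>f. f ` P \<subseteq> R \<and> inj_on f P \<and>
          (\<forall>x\<in>P. \<forall>y\<in>P. leP x y \<longrightarrow> leR (f x) (f y)))"

definition in_SAv ::
  "'r set \<Rightarrow> ('r \<Rightarrow> 'r \<Rightarrow> bool) \<Rightarrow> 'p set \<Rightarrow> ('p \<Rightarrow> 'p \<Rightarrow> bool) \<Rightarrow> bool" where
  "in_SAv R leR P leP \<longleftrightarrow> finite_poset R leR \<and> \<not> weakly_contains R leR P leP"

text \<open>Disjoint union and linear sum, on the ground set P <+> Q.\<close>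
fun disj_union_le ::
  "('p \<Rightarrow> 'p \<Rightarrow> bool) \<Rightarrow> ('q \<Rightarrow> 'q \<Rightarrow> bool) \<Rightarrow> 'p + 'q \<Rightarrow> 'p + 'q \<Rightarrow> bool" where
  "disj_union_le leP leQ (Inl x) (Inl y) = leP x y"
| "disj_union_le leP leQ (Inr x) (Inr y) = leQ x y"
| "disj_union_le leP leQ (Inl x) (Inr y) = False"
| "disj_union_le leP leQ (Inr x) (Inl y) = False"

fun lin_sum_le ::
  "('p \<Rightarrow> 'p \<Rightarrow> bool) \<Rightarrow> ('q \<Rightarrow> 'q \<Rightarrow> bool) \<Rightarrow> 'p + 'q \<Rightarrow> 'p + 'q \<Rightarrow> bool" where
  "lin_sum_le leP leQ (Inl x) (Inl y) = leP x y"
| "lin_sum_le leP leQ (Inr x) (Inr y) = leQ x y"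
| "lin_sum_le leP leQ (Inl x) (Inr y) = True"
| "lin_sum_le leP leQ (Inr x) (Inl y) = False"

definition partition2 :: "'a set \<Rightarrow> 'a set \<Rightarrow> 'a set \<Rightarrow> bool" where
  "partition2 R R1 R2 \<longleftrightarrow> R1 \<inter> R2 = {} \<and> R1 \<union> R2 = R"

definition ordered_partition2 ::
  "'a set \<Rightarrow> ('a \<Rightarrow> 'a \<Rightarrow> bool) \<Rightarrow> 'a set \<Rightarrow> 'a set \<Rightarrow> bool" where
  "ordered_partition2 R le R1 R2 \<longleftrightarrow> partition2 R R1 R2 \<and> (\<forall>x\<in>R1. \<forall>y\<in>R2. le x y)"

definition weakly_ordered_partition2 ::
  "'a set \<Rightarrow> ('a \<Rightarrow> 'a \<Rightarrow> bool) \<Rightarrow> 'a set \<Rightarrow> 'a set \<Rightarrow> bool" where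
  "weakly_ordered_partition2 R le R1 R2 \<longleftrightarrow> partition2 R R1 R2 \<and> (\<forall>x\<in>R1. \<forall>y\<in>R2. \<not> le y x)"

end

theory Submission
  imports Defs
begin

text \<open>An injective order-preserving map \<open>h\<close> of \<open>P + Q\<close> into \<open>R\<close> restricts to such maps of
\<open>P\<close> and of \<open>Q\<close> with disjoint images. For \<open>P \<sqcup> Q\<close> the image of \<open>P\<close> and its complement
form a partition. For \<open>P \<oplus> Q\<close> one takes instead the down-closure of the image of \<open>P\<close>: it
misses the image of \<open>Q\<close>, because \<open>h p \<le> h q\<close> always holds and antisymmetry would force
\<open>h p = h q\<close>, and a down-closed set and its complement form a weakly ordered partition.
Conversely, maps of \<open>P\<close> and \<open>Q\<close> into the two blocks of a partition glue to a map of
\<open>P \<sqcup> Q\<close>, and of \<open>P \<oplus> Q\<close> when the partition is ordered.\<close>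

definition order_injection ::
  "('a \<Rightarrow> 'b) \<Rightarrow> 'a set \<Rightarrow> ('a \<Rightarrow> 'a \<Rightarrow> bool) \<Rightarrow> 'b set \<Rightarrow> ('b \<Rightarrow> 'b \<Rightarrow> bool) \<Rightarrow> bool" where
  "order_injection f A leA B leB \<longleftrightarrow>
     f ` A \<subseteq> B \<and> inj_on f A \<and> (\<forall>x\<in>A. \<forall>y\<in>A. leA x y \<longrightarrow> leB (f x) (f y))"

lemma weakly_contains_iff_order_injection:
  "weakly_contains B leB A leA \<longleftrightarrow> (\<exists>f. order_injection f A leA B leB)"
  by (simp add: weakly_contains_def order_injection_def)

lemma finite_poset_subset: "finite_poset C le \<Longrightarrow> D \<subseteq> C \<Longrightarrow> finite_poset D le"
  unfolding finite_poset_def poset_on_def by (meson finite_subset subsetD)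

lemma in_SAv_subset_iff:
  "finite_poset C leC \<Longrightarrow> D \<subseteq> C \<Longrightarrow> in_SAv D leC A leA \<longleftrightarrow> \<not> weakly_contains D leC A leA"
  using finite_poset_subset unfolding in_SAv_def by blast

lemma order_injection_Inl:
  assumes h: "order_injection h (A <+> B) le C leC" and le: "\<And>x y. le (Inl x) (Inl y) \<longleftrightarrow> leA x y"
    and "(h \<circ> Inl) ` A \<subseteq> S"
  shows "order_injection (h \<circ> Inl) A leA S leC"
proof -
  have "inj_on (h \<circ> Inl) A"
    using h unfolding order_injection_def inj_on_def by (metis InlI comp_apply sum.inject(1))
  moreover have "leC (h (Inl x)) (h (Inl y))" if "x \<in> A" "y \<in> A" "leA x y" for x y
    using h le[of x y] that unfolding order_injection_def by blast
  ultimately show ?thesis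
    using assms(3) unfolding order_injection_def by simp
qed

lemma order_injection_Inr:
  assumes h: "order_injection h (A <+> B) le C leC" and le: "\<And>x y. le (Inr x) (Inr y) \<longleftrightarrow> leB x y"
    and "(h \<circ> Inr) ` B \<subseteq> S"
  shows "order_injection (h \<circ> Inr) B leB S leC"
proof -
  have "inj_on (h \<circ> Inr) B"
    using h unfolding order_injection_def inj_on_def by (metis InrI comp_apply sum.inject(2))
  moreover have "leC (h (Inr x)) (h (Inr y))" if "x \<in> B" "y \<in> B" "leB x y" for x y
    using h le[of x y] that unfolding order_injection_def by blast
  ultimately show ?thesis
    using assms(3) unfolding order_injection_def by simp
qed

lemma order_injection_case_sum:
  assumes f: "order_injection f A leA C1 leC" and g: "order_injection g B leB C2 leC"
    and disjoint: "C1 \<inter> C2 = {}"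
    and "\<And>x y. le (Inl x) (Inl y) \<Longrightarrow> leA x y" "\<And>x y. le (Inr x) (Inr y) \<Longrightarrow> leB x y"
    and "\<And>x y. x \<in> A \<Longrightarrow> y \<in> B \<Longrightarrow> le (Inl x) (Inr y) \<Longrightarrow> leC (f x) (g y)"
    and "\<And>x y. x \<in> B \<Longrightarrow> y \<in> A \<Longrightarrow> le (Inr x) (Inl y) \<Longrightarrow> leC (g x) (f y)"
  shows "order_injection (case_sum f g) (A <+> B) le (C1 \<union> C2) leC"
proof -
  have fA: "f ` A \<subseteq> C1" "inj_on f A" and gB: "g ` B \<subseteq> C2" "inj_on g B"
    using f g unfolding order_injection_def by auto
  have separate: "f x \<noteq> g y" if "x \<in> A" "y \<in> B" for x y
    using fA(1) gB(1) disjoint that by blast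
  have "inj_on (case_sum f g) (A <+> B)"
  proof (rule inj_onI)
    fix u v assume "u \<in> A <+> B" "v \<in> A <+> B" "case_sum f g u = case_sum f g v"
    then show "u = v"
      using fA(2) gB(2) separate by (elim PlusE) (auto dest: inj_onD sym)
  qed
  then show ?thesis
    using assms unfolding order_injection_def by (auto elim!: PlusE)
qed

lemma weakly_contains_disj_union:
  assumes "C1 \<inter> C2 = {}" "weakly_contains C1 leC A leA" "weakly_contains C2 leC B leB"
  shows "weakly_contains (C1 \<union> C2) leC (A <+> B) (disj_union_le leA leB)"
  using assms order_injection_case_sum[of _ A leA C1 leC _ B leB C2 "disj_union_le leA leB"]
  unfolding weakly_contains_iff_order_injection by fastforce

lemma weakly_contains_lin_sum:
  assumes "C1 \<inter> C2 = {}" "\<forall>x\<in>C1. \<forall>y\<in>C2. leC x y"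
    and "weakly_contains C1 leC A leA" "weakly_contains C2 leC B leB"
  shows "weakly_contains (C1 \<union> C2) leC (A <+> B) (lin_sum_le leA leB)"
proof -
  obtain f g where f: "order_injection f A leA C1 leC" and g: "order_injection g B leB C2 leC"
    using assms(3,4) unfolding weakly_contains_iff_order_injection by blast
  have cross: "leC (f x) (g y)" if "x \<in> A" "y \<in> B" for x y
  proof -
    have "f x \<in> C1" "g y \<in> C2"
      using f g that unfolding order_injection_def by auto
    then show ?thesis using assms(2) by blast
  qed
  have "order_injection (case_sum f g) (A <+> B) (lin_sum_le leA leB) (C1 \<union> C2) leC"
    by (rule order_injection_case_sum[OF f g assms(1)]) (simp_all add: cross)
  then show ?thesis
    unfolding weakly_contains_iff_order_injection by blast
qed

lemma weakly_contains_Plus_split: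
  assumes "weakly_contains C leC (A <+> B) le"
    and "\<And>x y. le (Inl x) (Inl y) \<longleftrightarrow> leA x y" "\<And>x y. le (Inr x) (Inr y) \<longleftrightarrow> leB x y"
  shows "\<exists>C1\<subseteq>C. weakly_contains C1 leC A leA \<and> weakly_contains (C - C1) leC B leB"
proof -
  obtain h where h: "order_injection h (A <+> B) le C leC"
    using assms(1) unfolding weakly_contains_iff_order_injection by blast
  then have into: "h ` (A <+> B) \<subseteq> C" and inj: "inj_on h (A <+> B)"
    unfolding order_injection_def by auto
  define C1 where "C1 = (h \<circ> Inl) ` A"
  have "C1 \<subseteq> C"
    using into unfolding C1_def by auto
  moreover have "(h \<circ> Inr) ` B \<subseteq> C - C1"
  proof
    fix c assume "c \<in> (h \<circ> Inr) ` B"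
    then obtain y where y: "y \<in> B" "c = h (Inr y)" by auto
    have "h (Inr y) \<noteq> h (Inl x)" if "x \<in> A" for x
      using inj_onD[OF inj, of "Inr y" "Inl x"] y that by auto
    then show "c \<in> C - C1"
      using into y unfolding C1_def by auto
  qed
  moreover have "order_injection (h \<circ> Inl) A leA C1 leC"
    using order_injection_Inl[OF h assms(2)] unfolding C1_def by blast
  ultimately show ?thesis
    using order_injection_Inr[OF h assms(3)] unfolding weakly_contains_iff_order_injection by blast
qed

lemma weakly_contains_lin_sum_split:
  assumes C: "poset_on C leC" and "weakly_contains C leC (A <+> B) (lin_sum_le leA leB)"
  shows "\<exists>C1. weakly_ordered_partition2 C leC C1 (C - C1) \<and>
              weakly_contains C1 leC A leA \<and> weakly_contains (C - C1) leC B leB"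
proof -
  obtain h where h: "order_injection h (A <+> B) (lin_sum_le leA leB) C leC"
    using assms(2) unfolding weakly_contains_iff_order_injection by blast
  then have hC: "h u \<in> C" if "u \<in> A <+> B" for u
    using that unfolding order_injection_def by auto
  have mono: "leC (h u) (h v)" if "u \<in> A <+> B" "v \<in> A <+> B" "lin_sum_le leA leB u v" for u v
    using h that unfolding order_injection_def by blast
  have antisym: "x = y" if "x \<in> C" "y \<in> C" "leC x y" "leC y x" for x y
    using C that unfolding poset_on_def by blast
  have trans: "leC x z" if "x \<in> C" "y \<in> C" "z \<in> C" "leC x y" "leC y z" for x y z
    using C that unfolding poset_on_def by blast
  define C1 where "C1 = {c\<in>C. \<exists>x\<in>A. leC c (h (Inl x))}"
  have "\<not> leC c' c" if "c \<in> C1" "c' \<in> C - C1" for c c'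
  proof
    assume "leC c' c"
    moreover obtain x where "x \<in> A" "leC c (h (Inl x))"
      using \<open>c \<in> C1\<close> unfolding C1_def by blast
    ultimately show False
      using that trans[of c' c "h (Inl x)"] hC[of "Inl x"] unfolding C1_def by auto
  qed
  then have "weakly_ordered_partition2 C leC C1 (C - C1)"
    unfolding weakly_ordered_partition2_def partition2_def C1_def by blast
  moreover have "(h \<circ> Inl) ` A \<subseteq> C1"
    using C hC unfolding C1_def poset_on_def by auto
  moreover have "(h \<circ> Inr) ` B \<subseteq> C - C1"
  proof
    fix c assume "c \<in> (h \<circ> Inr) ` B"
    then obtain y where y: "y \<in> B" "c = h (Inr y)" by auto
    have "c \<notin> C1"
    proof
      assume "c \<in> C1"
      then obtain x where x: "x \<in> A" "leC c (h (Inl x))" unfolding C1_def by auto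
      have "leC (h (Inl x)) c"
        using mono[of "Inl x" "Inr y"] x y by (simp add: InlI InrI)
      then have "h (Inl x) = h (Inr y)"
        using antisym x y hC by auto
      then show False
        using h x y unfolding order_injection_def inj_on_def by blast
    qed
    then show "c \<in> C - C1" using y hC by auto
  qed
  ultimately show ?thesis
    using order_injection_Inl[OF h lin_sum_le.simps(1)] order_injection_Inr[OF h lin_sum_le.simps(2)]
    unfolding weakly_contains_iff_order_injection by blast
qed

lemma in_SAv_disj_union_iff:
  assumes R: "finite_poset R leR"
  shows "in_SAv R leR (A <+> B) (disj_union_le leA leB) \<longleftrightarrow>
         (\<forall>R1 R2. partition2 R R1 R2 \<longrightarrow> in_SAv R1 leR A leA \<or> in_SAv R2 leR B leB)"
proof
  assume avoids: "in_SAv R leR (A <+> B) (disj_union_le leA leB)"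
  show "\<forall>R1 R2. partition2 R R1 R2 \<longrightarrow> in_SAv R1 leR A leA \<or> in_SAv R2 leR B leB"
  proof (intro allI impI)
    fix R1 R2 assume "partition2 R R1 R2"
    then have sub: "R1 \<subseteq> R" "R2 \<subseteq> R" and "R1 \<inter> R2 = {}" "R1 \<union> R2 = R"
      unfolding partition2_def by auto
    then have "\<not> (weakly_contains R1 leR A leA \<and> weakly_contains R2 leR B leB)"
      using avoids weakly_contains_disj_union[of R1 R2 leR A leA B leB]
      unfolding in_SAv_def by auto
    then show "in_SAv R1 leR A leA \<or> in_SAv R2 leR B leB"
      using in_SAv_subset_iff[OF R sub(1)] in_SAv_subset_iff[OF R sub(2)] by blast
  qed
next
  assume partitions: "\<forall>R1 R2. partition2 R R1 R2 \<longrightarrow> in_SAv R1 leR A leA \<or> in_SAv R2 leR B leB"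
  show "in_SAv R leR (A <+> B) (disj_union_le leA leB)"
  proof (rule ccontr)
    assume "\<not> ?thesis"
    then have contains: "weakly_contains R leR (A <+> B) (disj_union_le leA leB)"
      using in_SAv_subset_iff[OF R, of R] by blast
    obtain R1 where "R1 \<subseteq> R" "weakly_contains R1 leR A leA" "weakly_contains (R - R1) leR B leB"
      using weakly_contains_Plus_split[OF contains disj_union_le.simps(1) disj_union_le.simps(2)]
      by blast
    moreover have "partition2 R R1 (R - R1)"
      using \<open>R1 \<subseteq> R\<close> unfolding partition2_def by blast
    ultimately show False
      using partitions unfolding in_SAv_def by blast
  qed
qed

lemma in_SAv_lin_sum_ordered_partition:
  assumes R: "finite_poset R leR" and "in_SAv R leR (A <+> B) (lin_sum_le leA leB)"
    and "ordered_partition2 R leR R1 R2"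
  shows "in_SAv R1 leR A leA \<or> in_SAv R2 leR B leB"
  using assms weakly_contains_lin_sum[of R1 R2 leR A leA B leB]
  unfolding ordered_partition2_def partition2_def by (auto simp: in_SAv_subset_iff[OF R])

lemma not_in_SAv_lin_sum_weakly_ordered_partition:
  assumes R: "finite_poset R leR" and "\<not> in_SAv R leR (A <+> B) (lin_sum_le leA leB)"
  shows "\<exists>R1 R2. weakly_ordered_partition2 R leR R1 R2 \<and>
                 \<not> in_SAv R1 leR A leA \<and> \<not> in_SAv R2 leR B leB"
proof -
  have "weakly_contains R leR (A <+> B) (lin_sum_le leA leB)"
    using assms in_SAv_subset_iff[OF R, of R] by blast
  then obtain R1 where partition: "weakly_ordered_partition2 R leR R1 (R - R1)"
      and "weakly_contains R1 leR A leA" "weakly_contains (R - R1) leR B leB"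
    using weakly_contains_lin_sum_split R unfolding finite_poset_def by blast
  moreover have "R1 \<subseteq> R"
    using partition unfolding weakly_ordered_partition2_def partition2_def by blast
  ultimately show ?thesis
    using in_SAv_subset_iff[OF R, of R1] in_SAv_subset_iff[OF R, of "R - R1"] by blast
qed

theorem mainTheorem15:
  fixes P :: "'p set" and leP :: "'p \<Rightarrow> 'p \<Rightarrow> bool"
    and Q :: "'q set" and leQ :: "'q \<Rightarrow> 'q \<Rightarrow> bool"
    and R :: "'r set" and leR :: "'r \<Rightarrow> 'r \<Rightarrow> bool"
  assumes "finite_poset P leP" and "finite_poset Q leQ" and "finite_poset R leR"
  shows "(in_SAv R leR (P <+> Q) (disj_union_le leP leQ) \<longleftrightarrow>
            (\<forall>R1 R2. partition2 R R1 R2 \<longrightarrow> in_SAv R1 leR P leP \<or> in_SAv R2 leR Q leQ))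
       \<and> (in_SAv R leR (P <+> Q) (lin_sum_le leP leQ) \<longrightarrow>
            (\<forall>R1 R2. ordered_partition2 R leR R1 R2 \<longrightarrow> in_SAv R1 leR P leP \<or> in_SAv R2 leR Q leQ))
       \<and> (\<not> in_SAv R leR (P <+> Q) (lin_sum_le leP leQ) \<longrightarrow>
            (\<exists>R1 R2. weakly_ordered_partition2 R leR R1 R2 \<and>
                     \<not> in_SAv R1 leR P leP \<and> \<not> in_SAv R2 leR Q leQ))"
  using in_SAv_disj_union_iff[OF assms(3)] in_SAv_lin_sum_ordered_partition[OF assms(3)]
    not_in_SAv_lin_sum_weakly_ordered_partition[OF assms(3)]
  by blast

end
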